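(* Let $X$ be a $T_1$-space with $|X|\ge 3$ whose number of isolated points is finite and positive. Then $X$ is reconstructible.
   Context: For a topological space $X$ and $x \in X$, the set $X\setminus\{x\}$ carries the subspace topology. A card of $X$ is a space homeomorphic to $X \setminus \{x\}$ for some $x \in X$. The deck of $X$ is $\mathcal{D}(X)=\{[X\setminus\{x\}]_\sim : x \in X\}$, where $[Y]_\sim$ denotes the homeomorphism class of $Y$. A space $Z$ is a reconstruction of $X$ if $\mathcal{D}(Z)=\mathcal{D}(X)$. A space $X$ is reconstructible if every reconstruction of $X$ is homeomorphic to $X$. *)

theory Defs
  imports "HOL-Analysis.Analysis"
begin

definition card_of_space :: "'a topology \<Rightarrow> 'a \<Rightarrow> 'a topology" where
  "card_of_space X x = subtopology X (topspace X - {x})"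

text \<open>Z is a reconstruction of X: the decks (sets of homeomorphism classes of cards)
  coincide. Z may live on a different type than X.\<close>
definition is_reconstruction :: "'b topology \<Rightarrow> 'a topology \<Rightarrow> bool" where
  "is_reconstruction Z X \<longleftrightarrow>
     (\<forall>z\<in>topspace Z. \<exists>x\<in>topspace X. card_of_space Z z homeomorphic_space card_of_space X x) \<and>
     (\<forall>x\<in>topspace X. \<exists>z\<in>topspace Z. card_of_space X x homeomorphic_space card_of_space Z z)"

definition isolated_points_of :: "'a topology \<Rightarrow> 'a set" where
  "isolated_points_of X = {x \<in> topspace X. openin X {x}}"

end

theory Submission
  imports Defs
begin

text \<open>Let \<open>p\<close> be an isolated point of \<open>X\<close> and \<open>Z - {z}\<close> a card of \<open>Z\<close> homeomorphic to
  \<open>X - {p}\<close>. All cards of \<open>Z\<close> are \<open>T\<^sub>1\<close> and \<open>Z\<close> has at least three points, so \<open>Z\<close> is \<open>T\<^sub>1\<close>.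
  If \<open>z\<close> were not isolated, \<open>Z\<close> would have one isolated point fewer than \<open>X\<close>. A card of \<open>X\<close>
  at a non-isolated point keeps all isolated points of \<open>X\<close>, so it cannot be a card of \<open>Z\<close>;
  and if there is no such point, \<open>X\<close> is finite, hence so is \<open>Z\<close>, which is then discrete.
  So \<open>z\<close> is isolated, and since isolated points of \<open>T\<^sub>1\<close> spaces are clopen, the
  homeomorphism of the cards extends by \<open>p \<mapsto> z\<close>.\<close>

lemma topspace_card_of_space [simp]: "topspace (card_of_space X x) = topspace X - {x}"
  by (auto simp: card_of_space_def)

lemma is_reconstructionD:
  assumes "is_reconstruction Z X"
  shows "x \<in> topspace X \<Longrightarrow> \<exists>z\<in>topspace Z. card_of_space X x homeomorphic_space card_of_space Z z"
    and "z \<in> topspace Z \<Longrightarrow> \<exists>x\<in>topspace X. card_of_space Z z homeomorphic_space card_of_space X x"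
  using assms unfolding is_reconstruction_def by blast+

lemma continuous_map_extend_at_clopen_point:
  assumes "openin X {p}" and "closedin X {p}" and "z \<in> topspace Z"
    and "continuous_map (subtopology X (topspace X - {p})) Z f"
  shows "continuous_map X Z (\<lambda>x. if x = p then z else f x)"
proof (rule pasting_lemma [where I = UNIV and T = "\<lambda>b. if b then {p} else topspace X - {p}"
                               and f = "\<lambda>b. if b then \<lambda>_. z else f"])
  show "openin X (if b then {p} else topspace X - {p})" for b
    using assms(1,2) by (auto simp: closedin_def)
  show "continuous_map (subtopology X (if b then {p} else topspace X - {p})) Z
          (if b then \<lambda>_. z else f)" for b
    using assms(3,4) by auto
qed auto

lemma homeomorphic_space_extend_at_clopen_points:
  assumes "openin X {p}" and "closedin X {p}" and "openin Z {z}" and "closedin Z {z}"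
    and "card_of_space X p homeomorphic_space card_of_space Z z"
  shows "X homeomorphic_space Z"
proof -
  obtain f g where "homeomorphic_maps (card_of_space X p) (card_of_space Z z) f g"
    using assms(5) homeomorphic_space_def by blast
  then have f: "continuous_map (card_of_space X p) (card_of_space Z z) f"
    and g: "continuous_map (card_of_space Z z) (card_of_space X p) g"
    and g_f: "\<And>x. x \<in> topspace X - {p} \<Longrightarrow> g (f x) = x"
    and f_g: "\<And>y. y \<in> topspace Z - {z} \<Longrightarrow> f (g y) = y"
    by (auto simp: homeomorphic_maps_def)
  have f_into: "\<And>x. x \<in> topspace X - {p} \<Longrightarrow> f x \<in> topspace Z - {z}"
    using continuous_map_image_subset_topspace[OF f] by auto
  have g_into: "\<And>y. y \<in> topspace Z - {z} \<Longrightarrow> g y \<in> topspace X - {p}"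
    using continuous_map_image_subset_topspace[OF g] by auto
  have "p \<in> topspace X" "z \<in> topspace Z"
    using assms(1,3) openin_subset by blast+
  moreover have "continuous_map (subtopology X (topspace X - {p})) Z f"
    "continuous_map (subtopology Z (topspace Z - {z})) X g"
    using f g by (simp_all add: card_of_space_def continuous_map_in_subtopology)
  ultimately have "continuous_map X Z (\<lambda>x. if x = p then z else f x)"
    "continuous_map Z X (\<lambda>y. if y = z then p else g y)"
    by (simp_all add: continuous_map_extend_at_clopen_point assms(1-4))
  then have "homeomorphic_maps X Z (\<lambda>x. if x = p then z else f x) (\<lambda>y. if y = z then p else g y)"
    unfolding homeomorphic_maps_def using g_f f_g f_into g_into by fastforce
  then show ?thesis
    by (rule homeomorphic_maps_imp_homeomorphic_space)
qed

lemma isolated_points_of_card_of_space: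
  assumes "t1_space X"
  shows "isolated_points_of (card_of_space X x) = isolated_points_of X - {x}"
proof -
  have "openin X (topspace X - {x})"
    using assms by (simp add: t1_space_openin_delete_alt)
  then show ?thesis
    by (auto simp: isolated_points_of_def card_of_space_def openin_open_subtopology)
qed

lemma bij_betw_isolated_points_of:
  assumes "homeomorphic_map X Y f"
  shows "bij_betw f (isolated_points_of X) (isolated_points_of Y)"
proof -
  have onto: "f ` topspace X = topspace Y" and inj: "inj_on f (topspace X)"
    using assms homeomorphic_imp_surjective_map homeomorphic_imp_injective_map by blast+
  have open_iff: "openin Y {f x} \<longleftrightarrow> openin X {x}" if "x \<in> topspace X" for x
    using homeomorphic_map_openness[OF assms, of "{x}"] that by simp
  have "isolated_points_of Y = f ` isolated_points_of X"
  proof -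
    have "isolated_points_of Y = {y \<in> f ` topspace X. openin Y {y}}"
      by (simp add: isolated_points_of_def onto)
    also have "\<dots> = f ` {x \<in> topspace X. openin Y {f x}}"
      by blast
    also have "\<dots> = f ` isolated_points_of X"
      using open_iff by (auto simp: isolated_points_of_def)
    finally show ?thesis .
  qed
  moreover have "inj_on f (isolated_points_of X)"
    using inj by (rule inj_on_subset) (auto simp: isolated_points_of_def)
  ultimately show ?thesis
    by (simp add: bij_betw_def)
qed

lemma homeomorphic_space_isolated_points_of_eqpoll:
  "X homeomorphic_space Y \<Longrightarrow> isolated_points_of X \<approx> isolated_points_of Y"
  unfolding homeomorphic_space eqpoll_def using bij_betw_isolated_points_of by blast

lemma homeomorphic_space_topspace_eqpoll:
  assumes "X homeomorphic_space Y"
  shows "topspace X \<approx> topspace Y"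
proof -
  obtain f where "homeomorphic_map X Y f"
    using assms homeomorphic_space by blast
  then have "bij_betw f (topspace X) (topspace Y)"
    by (simp add: bij_betw_def homeomorphic_imp_surjective_map homeomorphic_imp_injective_map)
  then show ?thesis
    unfolding eqpoll_def by blast
qed

lemma t1_space_if_t1_cards:
  assumes t1_cards: "\<And>c. c \<in> topspace Z \<Longrightarrow> t1_space (card_of_space Z c)"
    and three: "a \<in> topspace Z" "b \<in> topspace Z" "c \<in> topspace Z" "a \<noteq> b" "a \<noteq> c" "b \<noteq> c"
  shows "t1_space Z"
  unfolding t1_space_def
proof (intro ballI impI)
  fix x y assume xy: "x \<in> topspace Z" "y \<in> topspace Z" "x \<noteq> y"
  have "\<exists>w\<in>{a, b, c}. w \<noteq> x \<and> w \<noteq> y"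
    using three(4-6) xy(3) by auto
  then obtain w where w: "w \<in> topspace Z" "w \<noteq> x" "w \<noteq> y"
    using three(1-3) by blast
  have "x \<in> topspace (card_of_space Z w)" "y \<in> topspace (card_of_space Z w)"
    using xy w by auto
  then obtain U where U: "openin (card_of_space Z w) U" "x \<in> U" "y \<notin> U"
    using t1_cards[OF w(1)] xy(3) unfolding t1_space_def by blast
  moreover obtain T where "openin Z T" "U = T \<inter> (topspace Z - {w})"
    using U(1) openin_subtopology unfolding card_of_space_def by metis
  ultimately show "\<exists>U. openin Z U \<and> x \<in> U \<and> y \<notin> U"
    using w(3) by auto
qed

lemma t1_space_reconstruction:
  assumes "t1_space X"
    and "\<exists>a b c. a \<in> topspace X \<and> b \<in> topspace X \<and> c \<in> topspace X \<and> a \<noteq> b \<and> a \<noteq> c \<and> b \<noteq> c"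
    and "is_reconstruction Z X"
  shows "t1_space Z"
proof -
  obtain a b p where abp: "a \<in> topspace X" "b \<in> topspace X" "p \<in> topspace X"
    "a \<noteq> b" "a \<noteq> p" "b \<noteq> p"
    using assms(2) by blast
  obtain z where z: "z \<in> topspace Z" "card_of_space X p homeomorphic_space card_of_space Z z"
    using is_reconstructionD(1)[OF assms(3) abp(3)] by blast
  have "topspace (card_of_space X p) \<approx> topspace (card_of_space Z z)"
    using z(2) by (rule homeomorphic_space_topspace_eqpoll)
  then obtain h where h: "bij_betw h (topspace X - {p}) (topspace Z - {z})"
    unfolding eqpoll_def by auto
  have "h a \<in> topspace Z - {z}" "h b \<in> topspace Z - {z}"
    using bij_betw_apply[OF h] abp by simp_all
  moreover have "h a \<noteq> h b"
    using inj_on_eq_iff[OF bij_betw_imp_inj_on[OF h]] abp by simp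
  ultimately have three: "h a \<in> topspace Z" "h b \<in> topspace Z" "h a \<noteq> h b" "h a \<noteq> z" "h b \<noteq> z"
    by auto
  have t1_cards: "t1_space (card_of_space Z c)" if c: "c \<in> topspace Z" for c
  proof -
    obtain x where "card_of_space Z c homeomorphic_space card_of_space X x"
      using is_reconstructionD(2)[OF assms(3) c] by blast
    moreover have "t1_space (card_of_space X x)"
      unfolding card_of_space_def using assms(1) by (rule t1_space_subtopology)
    ultimately show ?thesis
      using homeomorphic_t1_space by blast
  qed
  show ?thesis
    using t1_space_if_t1_cards[OF t1_cards three(1,2) z(1) three(3-5)] .
qed

lemma openin_singleton_if_finite_card:
  assumes "t1_space Z" and "z \<in> topspace Z" and "finite (topspace (card_of_space Z z))"
  shows "openin Z {z}"
proof -
  have "finite (topspace Z)"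
    using assms(3) by simp
  then have "Z = discrete_topology (topspace Z)"
    using finite_t1_space_imp_discrete_topology[OF refl _ assms(1)] by blast
  then show ?thesis
    using assms(2) by (metis openin_discrete_topology empty_subsetI insert_subset)
qed

lemma openin_singleton_if_matching_card:
  assumes t1: "t1_space X" "t1_space Z"
    and fin: "finite (isolated_points_of X)"
    and p: "p \<in> isolated_points_of X"
    and z: "z \<in> topspace Z" "card_of_space X p homeomorphic_space card_of_space Z z"
    and cards: "\<And>x. x \<in> topspace X \<Longrightarrow>
                  \<exists>w\<in>topspace Z. card_of_space X x homeomorphic_space card_of_space Z w"
  shows "openin Z {z}"
proof (rule ccontr)
  assume "\<not> openin Z {z}"
  then have "z \<notin> isolated_points_of Z"
    by (simp add: isolated_points_of_def)
  then have "isolated_points_of X - {p} \<approx> isolated_points_of Z"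
    using homeomorphic_space_isolated_points_of_eqpoll[OF z(2)]
    by (simp add: isolated_points_of_card_of_space t1)
  moreover have fin_Z: "finite (isolated_points_of Z)"
    using calculation fin eqpoll_finite_iff by blast
  ultimately have "card (isolated_points_of Z) = card (isolated_points_of X - {p})"
    using fin by (metis eqpoll_iff_card finite_Diff)
  also have "\<dots> < card (isolated_points_of X)"
    using fin p by (rule card_Diff1_less)
  finally have card_Z: "card (isolated_points_of Z) < card (isolated_points_of X)" .
  show False
  proof (cases "topspace X \<subseteq> isolated_points_of X")
    case True
    then have "finite (topspace X - {p})"
      using fin finite_subset by blast
    moreover have "topspace X - {p} \<approx> topspace Z - {z}"
      using homeomorphic_space_topspace_eqpoll[OF z(2)] by simp
    ultimately have "finite (topspace Z - {z})"
      using eqpoll_finite_iff by blast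
    then have "openin Z {z}"
      using t1(2) z(1) by (intro openin_singleton_if_finite_card) simp_all
    with \<open>\<not> openin Z {z}\<close> show False ..
  next
    case False
    then obtain x where x: "x \<in> topspace X" "x \<notin> isolated_points_of X"
      by blast
    then obtain w where "card_of_space X x homeomorphic_space card_of_space Z w"
      using cards by blast
    then have "isolated_points_of (card_of_space X x) \<approx> isolated_points_of (card_of_space Z w)"
      by (rule homeomorphic_space_isolated_points_of_eqpoll)
    then have "isolated_points_of X \<approx> isolated_points_of Z - {w}"
      using x(2) by (simp add: isolated_points_of_card_of_space t1)
    then have "card (isolated_points_of X) \<le> card (isolated_points_of Z)"
      using fin fin_Z by (simp add: eqpoll_iff_card card_mono)
    with card_Z show False
      by simp
  qed
qed

theorem theorem4p4:
  fixes X :: "'a topology" and Z :: "'b topology"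
  assumes "t1_space X"
    and "\<exists>a b c. a \<in> topspace X \<and> b \<in> topspace X \<and> c \<in> topspace X \<and> a \<noteq> b \<and> a \<noteq> c \<and> b \<noteq> c"
    and "finite (isolated_points_of X)"
    and "isolated_points_of X \<noteq> {}"
    and "is_reconstruction Z X"
  shows "X homeomorphic_space Z"
proof -
  have t1_Z: "t1_space Z"
    using assms(1,2,5) by (rule t1_space_reconstruction)
  obtain p where p: "p \<in> isolated_points_of X"
    using assms(4) by blast
  then have p_X: "p \<in> topspace X" "openin X {p}"
    by (auto simp: isolated_points_of_def)
  then obtain z where z: "z \<in> topspace Z" "card_of_space X p homeomorphic_space card_of_space Z z"
    using is_reconstructionD(1)[OF assms(5)] by blast
  have "closedin X {p}"
    using assms(1) p_X(1) by (rule closedin_t1_singleton)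
  moreover have "openin Z {z}"
    by (rule openin_singleton_if_matching_card[OF assms(1) t1_Z assms(3) p z
          is_reconstructionD(1)[OF assms(5)]])
  moreover have "closedin Z {z}"
    using t1_Z z(1) by (rule closedin_t1_singleton)
  ultimately show ?thesis
    by (rule homeomorphic_space_extend_at_clopen_points[OF p_X(2) _ _ _ z(2)])
qed

end
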